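(* Let $n$ be a positive integer such that $p=18(2n+1)^2+1$ is prime. Then for every primitive root $g$ of $\mathbb F_p$, $$(-1)^{|\tau_g|}=(-1)^{n+1}.$$
   Context: Let $p$ be an odd prime, $\mathbb F_p$ the field with $p$ elements, identified with $\{0,1,\ldots,p-1\}$, and $\mathcal H_p=\{1,2,\ldots,(p-1)/2\}\subseteq\mathbb F_p$. For a primitive root $g$ of $\mathbb F_p$, $\tau_g$ is the permutation of $\mathcal H_p$ given by $\tau_g(b)=g^b$ if $g^b\in\mathcal H_p$ and $\tau_g(b)=-g^b$ if $g^b\notin\mathcal H_p$ (for $b\in\mathcal H_p$). For a permutation $\pi$, $(-1)^{|\pi|}$ denotes its sign. *)

theory Defs
  imports "HOL-Number_Theory.Number_Theory" "HOL-Combinatorics.Combinatorics"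
begin

text \<open>Elements of F_p are identified with {0,...,p-1}; H_p = {1,...,(p-1)/2}.\<close>
definition half_set :: "nat \<Rightarrow> nat set" where
  "half_set p = {1..(p - 1) div 2}"

definition tau :: "nat \<Rightarrow> nat \<Rightarrow> nat \<Rightarrow> nat" where
  "tau p g b = (let r = g ^ b mod p in if r \<in> half_set p then r else p - r)"

end

theory Submission
  imports Defs "HOL-Library.Product_Lexorder"
begin

text \<open>
  Put \<open>h = (p - 1) / 2 = x^2\<close> with \<open>x = 3 (2n + 1)\<close>, and let \<open>a = g^2\<close>, an element of order \<open>h\<close>.
  Since \<open>\<tau>(b)^2 \<equiv> a^b\<close>, comparing the Vandermonde products \<open>V(y) = \<Prod>\<^sub>i\<^sub><\<^sub>j (y\<^sub>j - y\<^sub>i)\<close>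
  of \<open>(1^2, \<dots>, h^2)\<close> and of \<open>(a, \<dots>, a^h)\<close> gives \<open>sign \<tau> \<cdot> V(1^2, \<dots>, h^2) \<equiv> V(a, \<dots>, a^h)\<close>
  modulo \<open>p\<close>, and Wilson's theorem gives \<open>V(1^2, \<dots>, h^2) \<equiv> 1\<close>. To evaluate \<open>V(a, \<dots>, a^h)\<close>,
  index the exponents by a square grid, \<open>e - 1 = q x + r\<close>: traversing the pairs column by column
  costs the sign \<open>(-1)^(C^2)\<close> with \<open>C = x (x - 1) / 2\<close>, and both the product inside the columns
  and the product across columns are congruent to \<open>W^x\<close>, where \<open>W\<close> is the Vandermonde product of
  the powers of \<open>a^x\<close>, an element of odd order \<open>x\<close>. As \<open>W^2 \<equiv> (-1)^C x^x\<close>, this yields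
  \<open>V(a, \<dots>, a^h) \<equiv> x^h\<close>, which is \<open>(-1)^((x - 1) / 2) = (-1)^(n + 1)\<close> by Euler's criterion and
  quadratic reciprocity, because \<open>p \<equiv> 1\<close> modulo every prime factor of \<open>x\<close>.
\<close>

section \<open>Vandermonde products over tournaments\<close>

definition tournament_on :: "'a set \<Rightarrow> ('a \<Rightarrow> 'a \<Rightarrow> bool) \<Rightarrow> bool" where
  "tournament_on A R \<longleftrightarrow>
    (\<forall>i\<in>A. \<forall>j\<in>A. R i j \<longrightarrow> \<not> R j i) \<and> (\<forall>i\<in>A. \<forall>j\<in>A. i \<noteq> j \<longrightarrow> R i j \<or> R j i)"

definition ordered_pairs :: "('a \<Rightarrow> 'a \<Rightarrow> bool) \<Rightarrow> 'a set \<Rightarrow> ('a \<times> 'a) set" where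
  "ordered_pairs R A = {(i, j). i \<in> A \<and> j \<in> A \<and> R i j}"

definition vandermonde :: "('a \<Rightarrow> 'a \<Rightarrow> bool) \<Rightarrow> 'a set \<Rightarrow> ('a \<Rightarrow> 'b::comm_ring_1) \<Rightarrow> 'b" where
  "vandermonde R A y = (\<Prod>(i, j)\<in>ordered_pairs R A. y j - y i)"

lemma finite_ordered_pairs [simp]: "finite A \<Longrightarrow> finite (ordered_pairs R A)"
  unfolding ordered_pairs_def by (rule finite_subset[of _ "A \<times> A"]) auto

lemma tournament_on_less: "tournament_on A ((<) :: 'a::linorder \<Rightarrow> _)"
  unfolding tournament_on_def by auto

lemma tournament_on_inj_on:
  fixes f :: "'a \<Rightarrow> 'b::linorder"
  assumes "inj_on f A"
  shows "tournament_on A (\<lambda>i j. f i < f j)"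
proof -
  have "f i < f j \<or> f j < f i" if "i \<in> A" "j \<in> A" "i \<noteq> j" for i j
    using assms that by (metis inj_onD linorder_neqE)
  then show ?thesis
    unfolding tournament_on_def by auto
qed

lemma ordered_pairs_tournament_split:
  assumes "tournament_on A R" "tournament_on A S"
  shows "ordered_pairs R A =
      ordered_pairs R A \<inter> ordered_pairs S A \<union> {(i, j). i \<in> A \<and> j \<in> A \<and> R i j \<and> S j i}"
    and "ordered_pairs R A \<inter> ordered_pairs S A \<inter> {(i, j). i \<in> A \<and> j \<in> A \<and> R i j \<and> S j i} = {}"
proof -
  have "S i j \<or> S j i" if "i \<in> A" "j \<in> A" "R i j" for i j
    using assms that unfolding tournament_on_def by (cases "i = j") blast+
  moreover have "\<not> (S i j \<and> S j i)" if "i \<in> A" "j \<in> A" for i j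
    using assms(2) that unfolding tournament_on_def by blast
  ultimately show "ordered_pairs R A =
      ordered_pairs R A \<inter> ordered_pairs S A \<union> {(i, j). i \<in> A \<and> j \<in> A \<and> R i j \<and> S j i}"
    "ordered_pairs R A \<inter> ordered_pairs S A \<inter> {(i, j). i \<in> A \<and> j \<in> A \<and> R i j \<and> S j i} = {}"
    unfolding ordered_pairs_def by auto
qed

lemma vandermonde_change_order:
  assumes "finite A" and "tournament_on A R" and "tournament_on A S"
  shows "vandermonde R A y =
    (-1) ^ card {(i, j). i \<in> A \<and> j \<in> A \<and> R i j \<and> S j i} * vandermonde S A y"
proof -
  define d where "d = (\<lambda>(i, j). y j - y i)"
  define X where "X = {(i, j). i \<in> A \<and> j \<in> A \<and> R i j \<and> S j i}"
  define Y where "Y = ordered_pairs R A \<inter> ordered_pairs S A"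
  have "{(i, j). i \<in> A \<and> j \<in> A \<and> S i j \<and> R j i} = prod.swap ` X"
    unfolding X_def by auto
  then have R_split: "ordered_pairs R A = Y \<union> X" "Y \<inter> X = {}"
    and S_split: "ordered_pairs S A = Y \<union> prod.swap ` X" "Y \<inter> prod.swap ` X = {}"
    using ordered_pairs_tournament_split[OF assms(2,3)] ordered_pairs_tournament_split[OF assms(3,2)]
    unfolding X_def[symmetric] Y_def by (simp_all add: Int_commute)
  have fin: "finite X" "finite Y"
    using \<open>finite A\<close> R_split(1) unfolding Y_def by (metis finite_Un finite_ordered_pairs)+
  have "prod d (prod.swap ` X) = (\<Prod>q\<in>X. - d q)"
    by (subst prod.reindex) (simp_all add: d_def split_def)
  also have "\<dots> = (-1) ^ card X * prod d X"
    by (rule prod_uminus)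
  finally have swap: "prod d (prod.swap ` X) = (-1) ^ card X * prod d X" .
  have "vandermonde R A y = prod d Y * prod d X"
    unfolding vandermonde_def d_def[symmetric] R_split by (rule prod.union_disjoint) (use fin R_split in auto)
  moreover have "vandermonde S A y = prod d Y * ((-1) ^ card X * prod d X)"
    unfolding vandermonde_def d_def[symmetric] S_split swap[symmetric]
    by (rule prod.union_disjoint) (use fin S_split in auto)
  ultimately show ?thesis
    unfolding X_def[symmetric] by (simp add: mult_ac flip: power_add)
qed

lemma vandermonde_reindex:
  assumes "bij_betw \<phi> A B" and "\<And>i j. i \<in> A \<Longrightarrow> j \<in> A \<Longrightarrow> R i j \<longleftrightarrow> S (\<phi> i) (\<phi> j)"
  shows "vandermonde R A (y \<circ> \<phi>) = vandermonde S B y"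
proof -
  define m where "m = map_prod \<phi> \<phi>"
  have "inj_on m (ordered_pairs R A)"
    using assms(1) unfolding m_def bij_betw_def inj_on_def ordered_pairs_def by auto
  moreover have "m ` ordered_pairs R A = ordered_pairs S B"
    using assms unfolding m_def bij_betw_def ordered_pairs_def by (force simp: image_iff)
  ultimately have "bij_betw m (ordered_pairs R A) (ordered_pairs S B)"
    by (simp add: bij_betw_def)
  then show ?thesis
    unfolding vandermonde_def by (subst prod.reindex_bij_betw[symmetric, of m]) (simp_all add: m_def split_def)
qed

lemma vandermonde_scale:
  "vandermonde R A (\<lambda>i. c * y i) = c ^ card (ordered_pairs R A) * vandermonde R A y"
  unfolding vandermonde_def by (simp add: right_diff_distrib[symmetric] prod.distrib split_def)

lemma vandermonde_less_nested:
  fixes y :: "'a::linorder \<Rightarrow> 'b::comm_ring_1"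
  assumes "finite A"
  shows "vandermonde (<) A y = (\<Prod>j\<in>A. \<Prod>i\<in>{i\<in>A. i < j}. y j - y i)"
proof -
  have "ordered_pairs (<) A = prod.swap ` (SIGMA j:A. {i\<in>A. i < j})"
    unfolding ordered_pairs_def by force
  then have "vandermonde (<) A y = (\<Prod>(j, i)\<in>(SIGMA j:A. {i\<in>A. i < j}). y j - y i)"
    unfolding vandermonde_def by (simp add: prod.reindex split_def)
  also have "\<dots> = (\<Prod>j\<in>A. \<Prod>i\<in>{i\<in>A. i < j}. y j - y i)"
    using assms by (simp add: prod.Sigma)
  finally show ?thesis .
qed

definition inversions :: "('a::linorder \<Rightarrow> 'a) \<Rightarrow> 'a set \<Rightarrow> ('a \<times> 'a) set" where
  "inversions \<pi> A = {(i, j). i \<in> A \<and> j \<in> A \<and> i < j \<and> \<pi> j < \<pi> i}"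

lemma vandermonde_comp_inversions:
  assumes "finite A" and "bij_betw \<pi> A A"
  shows "vandermonde (<) A (y \<circ> \<pi>) = (-1) ^ card (inversions \<pi> A) * vandermonde (<) A y"
proof -
  have "tournament_on A (\<lambda>i j. \<pi> i < \<pi> j)"
    using bij_betw_imp_inj_on[OF assms(2)] by (rule tournament_on_inj_on)
  then have "vandermonde (<) A (y \<circ> \<pi>) =
      (-1) ^ card (inversions \<pi> A) * vandermonde (\<lambda>i j. \<pi> i < \<pi> j) A (y \<circ> \<pi>)"
    unfolding inversions_def by (rule vandermonde_change_order[OF assms(1) tournament_on_less])
  also have "vandermonde (\<lambda>i j. \<pi> i < \<pi> j) A (y \<circ> \<pi>) = vandermonde (<) A y"
    by (rule vandermonde_reindex[OF assms(2)]) simp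
  finally show ?thesis .
qed

lemma card_inversions_transpose:
  fixes a b :: "'a::linorder"
  assumes "finite A" "a \<in> A" "b \<in> A" "a < b"
  shows "card (inversions (Transposition.transpose a b) A) = 2 * card {c \<in> A. a < c \<and> c < b} + 1"
proof -
  define M where "M = {c \<in> A. a < c \<and> c < b}"
  define U where "U = Pair a ` M \<union> (\<lambda>c. (c, b)) ` M"
  have "finite M" "a \<notin> M" "b \<notin> M"
    using assms(1) unfolding M_def by auto
  have "inversions (Transposition.transpose a b) A = insert (a, b) U"
  proof (intro equalityI subsetI)
    fix q assume "q \<in> inversions (Transposition.transpose a b) A"
    then obtain i j where "q = (i, j)" "i \<in> A" "j \<in> A" "i < j"
      "Transposition.transpose a b j < Transposition.transpose a b i"
      unfolding inversions_def by blast
    then show "q \<in> insert (a, b) U"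
      using \<open>a < b\<close> unfolding U_def M_def transpose_def by (auto split: if_splits)
  next
    fix q assume "q \<in> insert (a, b) U"
    then show "q \<in> inversions (Transposition.transpose a b) A"
      using assms unfolding U_def M_def inversions_def transpose_def by auto
  qed
  also have "card (insert (a, b) U) = Suc (card U)"
    by (rule card_insert_disjoint) (use \<open>finite M\<close> \<open>a \<notin> M\<close> \<open>b \<notin> M\<close> in \<open>auto simp: U_def\<close>)
  also have "card U = card M + card M"
    unfolding U_def
    by (subst card_Un_disjoint) (use \<open>finite M\<close> \<open>a \<notin> M\<close> in \<open>auto simp: card_image inj_on_def\<close>)
  finally show ?thesis
    unfolding M_def by simp
qed

lemma vandermonde_comp_transpose:
  fixes y :: "'a::linorder \<Rightarrow> 'b::comm_ring_1"
  assumes "finite A" "a \<in> A" "b \<in> A" "a \<noteq> b"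
  shows "vandermonde (<) A (y \<circ> Transposition.transpose a b) = - vandermonde (<) A y"
proof -
  have odd_transpose: "odd (card (inversions (Transposition.transpose a b) A))" if "a < b" "a \<in> A" "b \<in> A" for a b
    using card_inversions_transpose[OF \<open>finite A\<close> that(2,3,1)] by simp
  have odd: "odd (card (inversions (Transposition.transpose a b) A))"
    using assms odd_transpose[of a b] odd_transpose[of b a] by (cases "a < b") (auto simp: transpose_commute)
  have bij: "bij_betw (Transposition.transpose a b) A A"
    using assms permutes_imp_bij permutes_swap_id by metis
  show ?thesis
    by (simp add: vandermonde_comp_inversions[OF assms(1) bij] neg_one_odd_power[OF odd])
qed

lemma vandermonde_comp_permutes:
  fixes y :: "'a::linorder \<Rightarrow> 'b::comm_ring_1"
  assumes "\<pi> permutes A" "finite A"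
  shows "vandermonde (<) A (y \<circ> \<pi>) = of_int (sign \<pi>) * vandermonde (<) A y"
  using assms
proof (induction \<pi> arbitrary: y rule: permutes_induct)
  case id
  then show ?case by simp
next
  case (swap a b \<pi>)
  have "vandermonde (<) A (y \<circ> (Transposition.transpose a b \<circ> \<pi>)) =
      of_int (sign \<pi>) * vandermonde (<) A (y \<circ> Transposition.transpose a b)"
    using swap.IH[of "y \<circ> Transposition.transpose a b"] by (simp only: comp_assoc)
  also have "\<dots> = of_int (- sign \<pi>) * vandermonde (<) A y"
    unfolding vandermonde_comp_transpose[OF \<open>finite A\<close> swap.hyps(1-3)] by simp
  also have "- sign \<pi> = sign (Transposition.transpose a b \<circ> \<pi>)"
    using swap.hyps permutes_imp_permutation[OF \<open>finite A\<close>]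
    by (simp add: sign_compose permutation_swap_id sign_swap_id)
  finally show ?case .
qed

lemma vandermonde_square:
  fixes y :: "'a::linorder \<Rightarrow> 'b::comm_ring_1"
  assumes "finite A"
  shows "vandermonde (<) A y ^ 2 =
    (-1) ^ card (ordered_pairs (<) A) * (\<Prod>i\<in>A. \<Prod>j\<in>A - {i}. y j - y i)"
proof -
  have "tournament_on A (>)"
    unfolding tournament_on_def by auto
  then have "vandermonde (<) A y = (-1) ^ card (ordered_pairs (<) A) * vandermonde (>) A y"
    using vandermonde_change_order[OF assms tournament_on_less, of "(>)" y]
    unfolding ordered_pairs_def by simp
  moreover have "vandermonde (<) A y * vandermonde (>) A y = (\<Prod>(i, j)\<in>(SIGMA i:A. A - {i}). y j - y i)"
  proof -
    have "(SIGMA i:A. A - {i}) = ordered_pairs (<) A \<union> ordered_pairs (>) A"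
      "ordered_pairs (<) A \<inter> ordered_pairs (>) A = {}"
      unfolding ordered_pairs_def by auto
    then show ?thesis
      unfolding vandermonde_def using assms by (simp add: prod.union_disjoint)
  qed
  ultimately show ?thesis
    using assms by (simp add: power2_eq_square prod.Sigma mult_ac)
qed

lemma double_sum_lessThan: "2 * (\<Sum>i<n. i) = n * (n - 1 :: nat)"
  by (induction n) (auto simp: algebra_simps)

lemma card_ordered_pairs_less: "2 * card (ordered_pairs (<) {..<n}) = n * (n - 1)"
proof (induction n)
  case (Suc n)
  have "ordered_pairs (<) {..<Suc n} = ordered_pairs (<) {..<n} \<union> (\<lambda>i. (i, n)) ` {..<n}"
    unfolding ordered_pairs_def by (auto simp: less_Suc_eq)
  moreover have "ordered_pairs (<) {..<n} \<inter> (\<lambda>i. (i, n)) ` {..<n} = {}"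
    unfolding ordered_pairs_def by auto
  ultimately have "card (ordered_pairs (<) {..<Suc n}) = card (ordered_pairs (<) {..<n}) + n"
    by (simp add: card_Un_disjoint card_image inj_on_def)
  then show ?case
    using Suc.IH by (cases n) (auto simp: algebra_simps)
qed (simp add: ordered_pairs_def)

section \<open>Lexicographic and column-wise order on a grid\<close>

lemma lex_index_less_iff:
  fixes q r q' r' n :: nat
  assumes "r < n" "r' < n"
  shows "q * n + r < q' * n + r' \<longleftrightarrow> (q, r) < (q', r')"
proof -
  have mono: "q * n + r < q' * n + r'" if "q < q'" "r < n" for q q' r r'
  proof -
    have "q * n + r < Suc q * n" using that by simp
    also have "\<dots> \<le> q' * n" using that by (intro mult_right_mono) auto
    finally show ?thesis by simp
  qed
  show ?thesis
  proof (cases q q' rule: linorder_cases)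
    case less
    then show ?thesis using mono[OF less \<open>r < n\<close>] by simp
  next
    case greater
    then show ?thesis using mono[OF greater \<open>r' < n\<close>, of r] by simp
  qed simp
qed

lemma bij_betw_lex_index:
  fixes m n :: nat
  shows "bij_betw (\<lambda>(q, r). q * n + r) ({..<m} \<times> {..<n}) {..<m * n}"
proof (rule bij_betw_byWitness[where f' = "\<lambda>e. (e div n, e mod n)"])
  show "(\<lambda>(q, r). q * n + r) ` ({..<m} \<times> {..<n}) \<subseteq> {..<m * n}"
  proof clarsimp
    fix q r assume "q < m" "r < n"
    have "q * n + r < Suc q * n" using \<open>r < n\<close> by simp
    also have "\<dots> \<le> m * n" using \<open>q < m\<close> by (intro mult_right_mono) auto
    finally show "q * n + r < m * n" .
  qed
  show "(\<lambda>e. (e div n, e mod n)) ` {..<m * n} \<subseteq> {..<m} \<times> {..<n}"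
  proof (rule image_subsetI)
    fix e assume "e \<in> {..<m * n}"
    then have "e < m * n" by simp
    then have "0 < n" by (cases n) simp_all
    then show "(e div n, e mod n) \<in> {..<m} \<times> {..<n}"
      using \<open>e < m * n\<close> by (simp add: less_mult_imp_div_less)
  qed
qed auto

lemma vandermonde_lex_colex:
  fixes y :: "'a::linorder \<times> 'b::linorder \<Rightarrow> 'c::comm_ring_1"
  assumes "finite A" "finite B"
  shows "vandermonde (<) (A \<times> B) y =
    (-1) ^ (card (ordered_pairs (<) A) * card (ordered_pairs (<) B)) *
    vandermonde (\<lambda>u v. prod.swap u < prod.swap v) (A \<times> B) y"
proof -
  define \<psi> :: "('a \<times> 'a) \<times> ('b \<times> 'b) \<Rightarrow> ('a \<times> 'b) \<times> ('a \<times> 'b)"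
    where "\<psi> = (\<lambda>((q, q'), (r', r)). ((q, r), (q', r')))"
  have "tournament_on (A \<times> B) (\<lambda>u v. prod.swap u < prod.swap v)"
    by (rule tournament_on_inj_on) (simp add: swap_inj_on)
  then have "vandermonde (<) (A \<times> B) y =
      (-1) ^ card {(u, v). u \<in> A \<times> B \<and> v \<in> A \<times> B \<and> u < v \<and> prod.swap v < prod.swap u} *
      vandermonde (\<lambda>u v. prod.swap u < prod.swap v) (A \<times> B) y"
    using assms by (intro vandermonde_change_order tournament_on_less) simp_all
  also have "{(u, v). u \<in> A \<times> B \<and> v \<in> A \<times> B \<and> u < v \<and> prod.swap v < prod.swap u} =
      \<psi> ` (ordered_pairs (<) A \<times> ordered_pairs (<) B)"
    unfolding \<psi>_def ordered_pairs_def by (force simp: image_iff)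
  also have "card \<dots> = card (ordered_pairs (<) A) * card (ordered_pairs (<) B)"
    by (subst card_image) (auto simp: \<psi>_def inj_on_def card_cartesian_product)
  finally show ?thesis .
qed

lemma vandermonde_colex_split:
  fixes y :: "'a::linorder \<times> 'b::linorder \<Rightarrow> 'c::comm_ring_1"
  assumes "finite A" "finite B"
  shows "vandermonde (\<lambda>u v. prod.swap u < prod.swap v) (A \<times> B) y =
    (\<Prod>r\<in>B. vandermonde (<) A (\<lambda>q. y (q, r))) *
    (\<Prod>(r, r')\<in>ordered_pairs (<) B. \<Prod>q\<in>A. \<Prod>q'\<in>A. y (q', r') - y (q, r))"
proof -
  define d where "d = (\<lambda>(u, v). y v - y u)"
  define same where "same = (\<lambda>(r, (q, q')). ((q, r), (q', r))) ` (B \<times> ordered_pairs (<) A)"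
  define cross where "cross = (\<lambda>((r, r'), (q, q')). ((q, r), (q', r'))) ` (ordered_pairs (<) B \<times> (A \<times> A))"
  have inj: "inj_on (\<lambda>(r, (q, q')). ((q, r), (q', r))) (B \<times> ordered_pairs (<) A)"
    "inj_on (\<lambda>((r, r'), (q, q')). ((q, r), (q', r'))) (ordered_pairs (<) B \<times> (A \<times> A))"
    unfolding inj_on_def by auto
  have "ordered_pairs (\<lambda>u v. prod.swap u < prod.swap v) (A \<times> B) = same \<union> cross"
    unfolding same_def cross_def ordered_pairs_def by (force simp: image_iff)
  moreover have "same \<inter> cross = {}"
    unfolding same_def cross_def ordered_pairs_def by auto
  moreover have "finite same" "finite cross"
    unfolding same_def cross_def using assms by simp_all
  ultimately have "vandermonde (\<lambda>u v. prod.swap u < prod.swap v) (A \<times> B) y = prod d same * prod d cross"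
    unfolding vandermonde_def d_def[symmetric] by (simp add: prod.union_disjoint)
  also have "prod d same = (\<Prod>(r, (q, q'))\<in>B \<times> ordered_pairs (<) A. y (q', r) - y (q, r))"
    unfolding same_def by (subst prod.reindex[OF inj(1)]) (simp add: d_def comp_def split_def)
  also have "\<dots> = (\<Prod>r\<in>B. vandermonde (<) A (\<lambda>q. y (q, r)))"
    unfolding vandermonde_def by (rule prod.cartesian_product[symmetric])
  also have "prod d cross =
      (\<Prod>((r, r'), (q, q'))\<in>ordered_pairs (<) B \<times> (A \<times> A). y (q', r') - y (q, r))"
    unfolding cross_def by (subst prod.reindex[OF inj(2)]) (simp add: d_def comp_def split_def)
  also have "\<dots> = (\<Prod>(r, r')\<in>ordered_pairs (<) B. \<Prod>q\<in>A. \<Prod>q'\<in>A. y (q', r') - y (q, r))"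
    by (simp add: prod.cartesian_product split_def)
  finally show ?thesis .
qed

section \<open>Elementary symmetric functions\<close>

definition elem_sym :: "nat \<Rightarrow> ('a \<Rightarrow> 'b::comm_semiring_1) \<Rightarrow> 'a set \<Rightarrow> 'b" where
  "elem_sym k f A = (\<Sum>S | S \<subseteq> A \<and> card S = k. \<Prod>i\<in>S. f i)"

lemma prod_diff_elem_sym:
  fixes f :: "'a \<Rightarrow> 'b::comm_ring_1"
  assumes "finite A"
  shows "(\<Prod>i\<in>A. t - c * f i) = (\<Sum>k\<le>card A. t ^ (card A - k) * (-c) ^ k * elem_sym k f A)"
proof -
  have "(\<Prod>i\<in>A. t - c * f i) = (\<Sum>S\<in>Pow A. t ^ (card A - card S) * (-c) ^ card S * (\<Prod>i\<in>S. f i))"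
  proof (subst prod_diff_conv_sum[OF assms], rule sum.cong[OF refl])
    fix S assume "S \<in> Pow A"
    then have "card (A - S) = card A - card S"
      using assms by (auto intro: finite_subset card_Diff_subset)
    moreover have "(-c) ^ card S = (-1) ^ card S * c ^ card S"
      by (metis mult_minus1 power_mult_distrib)
    ultimately show "(-1) ^ card S * (\<Prod>i\<in>S. c * f i) * (\<Prod>i\<in>A - S. t) =
        t ^ (card A - card S) * (-c) ^ card S * (\<Prod>i\<in>S. f i)"
      by (simp add: prod.distrib mult_ac)
  qed
  also have "\<dots> = (\<Sum>k\<le>card A. \<Sum>S | S \<in> Pow A \<and> card S = k.
                     t ^ (card A - card S) * (-c) ^ card S * (\<Prod>i\<in>S. f i))"
    by (rule sum.group[symmetric]) (use assms card_mono in auto)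
  also have "\<dots> = (\<Sum>k\<le>card A. t ^ (card A - k) * (-c) ^ k * elem_sym k f A)"
    unfolding elem_sym_def by (auto simp: sum_distrib_left intro!: sum.cong)
  finally show ?thesis .
qed

lemma elem_sym_0 [simp]: "finite A \<Longrightarrow> elem_sym 0 f A = 1"
proof -
  assume "finite A"
  then have "S = {}" if "S \<subseteq> A" "card S = 0" for S
    using that by (meson card_0_eq finite_subset)
  then have "{S. S \<subseteq> A \<and> card S = 0} = {{}}"
    by auto
  then show ?thesis
    unfolding elem_sym_def by simp
qed

lemma elem_sym_card: "finite A \<Longrightarrow> elem_sym (card A) f A = (\<Prod>i\<in>A. f i)"
proof -
  assume "finite A"
  then have "{S. S \<subseteq> A \<and> card S = card A} = {A}"
    by (auto dest: card_subset_eq)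
  then show ?thesis
    unfolding elem_sym_def by simp
qed

lemma elem_sym_insert:
  assumes "finite A" "a \<notin> A"
  shows "elem_sym (Suc k) f (insert a A) = elem_sym (Suc k) f A + f a * elem_sym k f A"
proof -
  define K1 where "K1 = {S. S \<subseteq> A \<and> card S = Suc k}"
  define K0 where "K0 = {S. S \<subseteq> A \<and> card S = k}"
  have fin: "finite K1" "finite K0"
    using assms(1) unfolding K1_def K0_def by simp_all
  have K0_fin: "finite S" "a \<notin> S" if "S \<in> K0" for S
    using that assms finite_subset[OF _ assms(1)] unfolding K0_def by auto
  have split: "{S. S \<subseteq> insert a A \<and> card S = Suc k} = K1 \<union> insert a ` K0"
  proof (intro equalityI subsetI)
    fix S assume "S \<in> {S. S \<subseteq> insert a A \<and> card S = Suc k}"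
    then have S: "S \<subseteq> insert a A" "card S = Suc k" by simp_all
    then have "finite S"
      using finite_subset[OF S(1)] assms(1) by simp
    show "S \<in> K1 \<union> insert a ` K0"
    proof (cases "a \<in> S")
      case True
      then have "S - {a} \<in> K0"
        using S \<open>finite S\<close> unfolding K0_def by auto
      moreover have "S = insert a (S - {a})"
        using True by auto
      ultimately show ?thesis by blast
    next
      case False
      then show ?thesis using S unfolding K1_def by blast
    qed
  next
    fix S assume "S \<in> K1 \<union> insert a ` K0"
    then consider "S \<in> K1" | T where "T \<in> K0" "S = insert a T" by blast
    then show "S \<in> {S. S \<subseteq> insert a A \<and> card S = Suc k}"
    proof cases
      case 2
      then show ?thesis using K0_fin[OF 2(1)] unfolding K0_def by auto
    qed (auto simp: K1_def)
  qed
  have disj: "K1 \<inter> insert a ` K0 = {}"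
    using assms(2) unfolding K1_def by auto
  have inj: "inj_on (insert a) K0"
    using K0_fin(2) unfolding inj_on_def by (metis Diff_insert_absorb)
  have "elem_sym (Suc k) f (insert a A) = (\<Sum>S\<in>K1. prod f S) + (\<Sum>S\<in>insert a ` K0. prod f S)"
    unfolding elem_sym_def split by (rule sum.union_disjoint) (use fin disj in auto)
  also have "(\<Sum>S\<in>insert a ` K0. prod f S) = (\<Sum>S\<in>K0. f a * prod f S)"
    by (simp add: sum.reindex[OF inj] K0_fin)
  finally show ?thesis
    unfolding elem_sym_def K1_def K0_def by (simp add: sum_distrib_left)
qed

section \<open>Roots of unity of odd order modulo a prime\<close>

locale odd_root_of_unity_mod_prime =
  fixes p :: int and b :: int and n :: nat
  assumes prime: "prime p"
    and root: "[b ^ n = 1] (mod p)"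
    and primitive: "\<And>k. 0 < k \<Longrightarrow> k < n \<Longrightarrow> \<not> [b ^ k = 1] (mod p)"
    and odd_order: "odd n"
begin

lemma order_pos: "n > 0"
  using odd_order by (cases n) auto

lemma pow_mod_order: "[b ^ i = b ^ (i mod n)] (mod p)"
proof -
  have "b ^ i = b ^ (n * (i div n) + i mod n)"
    by simp
  also have "\<dots> = (b ^ n) ^ (i div n) * b ^ (i mod n)"
    by (simp only: power_add power_mult)
  also have "[\<dots> = 1 ^ (i div n) * b ^ (i mod n)] (mod p)"
    by (intro cong_mult cong_pow root cong_refl)
  finally show ?thesis by simp
qed

lemma coprime_root: "coprime b p"
proof -
  have "coprime (b ^ n) p"
    using cong_imp_coprime[OF cong_sym[OF root]] by simp
  then show ?thesis
    using order_pos by simp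
qed

lemma pow_cong_imp_cong:
  assumes "[b ^ i = b ^ j] (mod p)"
  shows "[i = j] (mod n)"
proof -
  have ordered: "[i = j] (mod n)" if "[b ^ i = b ^ j] (mod p)" "j \<le> i" for i j
  proof -
    have "[b ^ j * b ^ (i - j) = b ^ j * 1] (mod p)"
      using that by (simp flip: power_add)
    moreover have "coprime (b ^ j) p"
      using coprime_root by simp
    ultimately have "[b ^ (i - j) = 1] (mod p)"
      using cong_mult_lcancel by blast
    then have "[b ^ ((i - j) mod n) = 1] (mod p)"
      using pow_mod_order[of "i - j"] by (metis cong_sym cong_trans)
    then have "(i - j) mod n = 0"
      using primitive[of "(i - j) mod n"] order_pos by (cases "(i - j) mod n = 0") auto
    then show ?thesis
      using that(2) by (simp add: cong_altdef_nat cong_sym mod_eq_0_iff_dvd)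
  qed
  show ?thesis
  proof (cases "j \<le> i")
    case False
    then show ?thesis
      using ordered[OF cong_sym[OF assms]] by (simp add: cong_sym)
  qed (rule ordered[OF assms])
qed

lemma prod_powers: "[(\<Prod>i<n. b ^ i) = 1] (mod p)"
proof -
  obtain m where "n = 2 * m + 1"
    using odd_order oddE by blast
  then have "(\<Sum>i<n. i) = n * m"
    using double_sum_lessThan[of n] by simp
  then have "(\<Prod>i<n. b ^ i) = b ^ (n * m)"
    by (simp add: power_sum[symmetric])
  then show ?thesis
    using pow_mod_order[of "n * m"] by simp
qed

text \<open>Multiplying every element of \<open>{1, b, \<dots>, b^(n-1)}\<close> by \<open>b\<close> permutes it, so
  each elementary symmetric function of degree \<open>k\<close> is fixed by the factor \<open>b^k \<noteq> 1\<close>.\<close>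
lemma elem_sym_powers_cong_0:
  assumes "0 < k" "k < n"
  shows "[elem_sym k (\<lambda>i. b ^ i) {..<n} = 0] (mod p)"
proof -
  define s where "s i = Suc i mod n" for i
  define K where "K = {S. S \<subseteq> {..<n} \<and> card S = k}"
  have inj_s: "inj_on s {..<n}"
  proof (rule inj_onI)
    fix i j assume "i \<in> {..<n}" "j \<in> {..<n}" "s i = s j"
    then have "[i = j] (mod n)"
      unfolding s_def using cong_add_lcancel_nat[of 1 i j n] by (simp add: cong_def)
    then show "i = j"
      using \<open>i \<in> {..<n}\<close> \<open>j \<in> {..<n}\<close> by (simp add: cong_def)
  qed
  have inj_s_sub: "inj_on s S" if "S \<in> K" for S
    using that inj_s unfolding K_def by (auto intro: inj_on_subset)
  have "finite K"
    unfolding K_def by simp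
  have inj_K: "inj_on (image s) K"
    unfolding K_def by (rule inj_on_subset[OF inj_on_image_Pow[OF inj_s]]) auto
  have "image s ` K \<subseteq> K"
  proof
    fix T assume "T \<in> image s ` K"
    then obtain S where "S \<in> K" "T = s ` S" by blast
    moreover have "s ` {..<n} \<subseteq> {..<n}"
      unfolding s_def using order_pos by auto
    ultimately show "T \<in> K"
      using inj_s_sub unfolding K_def by (auto simp: card_image)
  qed
  then have K_perm: "image s ` K = K"
    by (rule endo_inj_surj[OF \<open>finite K\<close> _ inj_K])
  have "elem_sym k (\<lambda>i. b ^ i) {..<n} = (\<Sum>T\<in>image s ` K. \<Prod>i\<in>T. b ^ i)"
    unfolding elem_sym_def K_def[symmetric] K_perm ..
  also have "\<dots> = (\<Sum>S\<in>K. \<Prod>i\<in>S. b ^ s i)"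
    by (simp add: sum.reindex[OF inj_K] prod.reindex[OF inj_s_sub])
  also have "[\<dots> = (\<Sum>S\<in>K. \<Prod>i\<in>S. b * b ^ i)] (mod p)"
  proof (intro cong_sum cong_prod)
    fix i
    show "[b ^ s i = b * b ^ i] (mod p)"
      unfolding s_def using pow_mod_order[of "Suc i"] by (simp add: cong_sym)
  qed
  also have "(\<Sum>S\<in>K. \<Prod>i\<in>S. b * b ^ i) = (\<Sum>S\<in>K. b ^ k * (\<Prod>i\<in>S. b ^ i))"
    unfolding K_def by (intro sum.cong) (simp_all add: prod.distrib)
  also have "\<dots> = b ^ k * elem_sym k (\<lambda>i. b ^ i) {..<n}"
    unfolding elem_sym_def K_def by (simp add: sum_distrib_left)
  finally have "p dvd (b ^ k - 1) * elem_sym k (\<lambda>i. b ^ i) {..<n}"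
    by (simp add: cong_iff_dvd_diff algebra_simps dvd_diff_commute)
  moreover have "\<not> p dvd (b ^ k - 1)"
    using primitive[OF assms] by (simp add: cong_iff_dvd_diff)
  ultimately show ?thesis
    using prime prime_dvd_mult_iff by (auto simp: cong_0_iff)
qed

lemma prod_linear_factors: "[(\<Prod>i<n. t - c * b ^ i) = t ^ n - c ^ n] (mod p)"
proof -
  have "(\<Prod>i<n. t - c * b ^ i) = (\<Sum>k\<le>n. t ^ (n - k) * (-c) ^ k * elem_sym k (\<lambda>i. b ^ i) {..<n})"
    using prod_diff_elem_sym[of "{..<n}" t c] by simp
  also have "[\<dots> = (\<Sum>k\<le>n. (if k = 0 then t ^ n else 0) + (if k = n then (-c) ^ n else 0))] (mod p)"
  proof (rule cong_sum)
    fix k assume "k \<in> {..n}"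
    then consider "k = 0" | "k = n" | "0 < k" "k < n"
      by fastforce
    then show "[t ^ (n - k) * (-c) ^ k * elem_sym k (\<lambda>i. b ^ i) {..<n} =
        (if k = 0 then t ^ n else 0) + (if k = n then (-c) ^ n else 0)] (mod p)"
    proof cases
      case 2
      have "[elem_sym n (\<lambda>i. b ^ i) {..<n} = 1] (mod p)"
        unfolding elem_sym_card[of "{..<n}", simplified] by (rule prod_powers)
      then show ?thesis
        using 2 order_pos cong_scalar_left[of _ 1 p "(-c) ^ n"] by simp
    next
      case 3
      then show ?thesis
        using elem_sym_powers_cong_0[of k] cong_scalar_left[of _ 0 p "t ^ (n - k) * (-c) ^ k"] by simp
    qed (use order_pos in simp)
  qed
  also have "(\<Sum>k\<le>n. (if k = 0 then t ^ n else 0) + (if k = n then (-c) ^ n else 0)) = t ^ n - c ^ n"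
    using odd_order by (simp add: sum.distrib)
  finally show ?thesis .
qed

lemma prod_one_minus_powers: "[(\<Prod>i\<in>{1..<n}. 1 - b ^ i) = int n] (mod p)"
proof -
  have elem_sym_tail: "[elem_sym k (\<lambda>i. b ^ i) {1..<n} = (-1) ^ k] (mod p)" if "k < n" for k
    using that
  proof (induction k)
    case (Suc k)
    have "{..<n} = insert 0 {1..<n}"
      using order_pos by auto
    then have "elem_sym (Suc k) (\<lambda>i. b ^ i) {..<n} =
        elem_sym (Suc k) (\<lambda>i. b ^ i) {1..<n} + elem_sym k (\<lambda>i. b ^ i) {1..<n}"
      by (simp add: elem_sym_insert)
    then have "[elem_sym (Suc k) (\<lambda>i. b ^ i) {1..<n} + elem_sym k (\<lambda>i. b ^ i) {1..<n} = 0] (mod p)"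
      using elem_sym_powers_cong_0[of "Suc k"] Suc.prems by simp
    then have "[elem_sym (Suc k) (\<lambda>i. b ^ i) {1..<n} = - elem_sym k (\<lambda>i. b ^ i) {1..<n}] (mod p)"
      by (simp add: cong_iff_dvd_diff)
    also have "[- elem_sym k (\<lambda>i. b ^ i) {1..<n} = - ((-1) ^ k)] (mod p)"
      using Suc by (simp add: cong_minus_minus_iff)
    finally show ?case by simp
  qed simp
  have "(\<Prod>i\<in>{1..<n}. 1 - b ^ i) =
      (\<Sum>k\<le>n - 1. (-1) ^ k * elem_sym k (\<lambda>i. b ^ i) {1..<n})"
    using prod_diff_elem_sym[of "{1..<n}" 1 1] by simp
  also have "[\<dots> = (\<Sum>k\<le>n - 1. (-1) ^ k * (-1) ^ k)] (mod p)"
    using elem_sym_tail order_pos by (intro cong_sum cong_mult cong_refl) auto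
  also have "(\<Sum>k\<le>n - 1. (-1::int) ^ k * (-1) ^ k) = int n"
    using order_pos by (simp flip: power_add)
  finally show ?thesis .
qed

lemma prod_diff_powers:
  assumes "i < n"
  shows "[(\<Prod>j\<in>{..<n} - {i}. b ^ i - b ^ j) = (b ^ i) ^ (n - 1) * int n] (mod p)"
proof -
  define f where "f k = (i + k) mod n" for k
  have inj_f: "inj_on f {1..<n}"
  proof (rule inj_onI)
    fix k k' assume "k \<in> {1..<n}" "k' \<in> {1..<n}" "f k = f k'"
    then have "[k = k'] (mod n)"
      unfolding f_def using cong_add_lcancel_nat[of i k k' n] by (simp add: cong_def)
    then show "k = k'"
      using \<open>k \<in> {1..<n}\<close> \<open>k' \<in> {1..<n}\<close> by (simp add: cong_def)
  qed
  have "f ` {1..<n} \<subseteq> {..<n} - {i}"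
  proof
    fix j assume "j \<in> f ` {1..<n}"
    then obtain k where k: "k \<in> {1..<n}" "j = f k" by blast
    have "j \<noteq> i"
    proof
      assume "j = i"
      then have "[i + k = i + 0] (mod n)"
        using k assms unfolding f_def cong_def by simp
      then show False
        using k cong_add_lcancel_nat[of i k 0 n] by (simp add: cong_def)
    qed
    then show "j \<in> {..<n} - {i}"
      using k order_pos unfolding f_def by simp
  qed
  moreover have "card (f ` {1..<n}) = card ({..<n} - {i})"
    using card_image[OF inj_f] assms by simp
  ultimately have "bij_betw f {1..<n} ({..<n} - {i})"
    using inj_f by (simp add: bij_betw_def card_subset_eq)
  then have "(\<Prod>j\<in>{..<n} - {i}. b ^ i - b ^ j) = (\<Prod>k\<in>{1..<n}. b ^ i - b ^ f k)"
    by (rule prod.reindex_bij_betw[symmetric])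
  also have "[\<dots> = (\<Prod>k\<in>{1..<n}. b ^ i * (1 - b ^ k))] (mod p)"
  proof (rule cong_prod)
    fix k
    have "[b ^ f k = b ^ (i + k)] (mod p)"
      unfolding f_def using pow_mod_order[of "i + k"] by (simp add: cong_sym)
    then show "[b ^ i - b ^ f k = b ^ i * (1 - b ^ k)] (mod p)"
      using cong_diff[OF cong_refl[of "b ^ i"]] by (simp add: power_add algebra_simps)
  qed
  also have "(\<Prod>k\<in>{1..<n}. b ^ i * (1 - b ^ k)) = (b ^ i) ^ (n - 1) * (\<Prod>k\<in>{1..<n}. 1 - b ^ k)"
    by (simp add: prod.distrib)
  also have "[\<dots> = (b ^ i) ^ (n - 1) * int n] (mod p)"
    by (intro cong_mult cong_refl prod_one_minus_powers)
  finally show ?thesis .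
qed

lemma vandermonde_powers_square:
  "[vandermonde (<) {..<n} (\<lambda>i. b ^ i) ^ 2 = (-1) ^ card (ordered_pairs (<) {..<n}) * int n ^ n] (mod p)"
proof -
  have "even (n - 1)"
    using odd_order order_pos by simp
  then have swap: "(\<Prod>j\<in>{..<n} - {i}. b ^ j - b ^ i) = (\<Prod>j\<in>{..<n} - {i}. b ^ i - b ^ j)" if "i < n" for i
    using that prod_diff_swap[of "\<lambda>j. b ^ j" "\<lambda>_. b ^ i" "{..<n} - {i}"] by simp
  have "vandermonde (<) {..<n} (\<lambda>i. b ^ i) ^ 2 =
      (-1) ^ card (ordered_pairs (<) {..<n}) * (\<Prod>i<n. \<Prod>j\<in>{..<n} - {i}. b ^ i - b ^ j)"
    by (simp add: vandermonde_square swap)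
  also have "[\<dots> = (-1) ^ card (ordered_pairs (<) {..<n}) * (\<Prod>i<n. (b ^ i) ^ (n - 1) * int n)] (mod p)"
    by (intro cong_mult cong_refl cong_prod prod_diff_powers) simp
  also have "(\<Prod>i<n. (b ^ i) ^ (n - 1) * int n) = (\<Prod>i<n. b ^ i) ^ (n - 1) * int n ^ n"
    by (simp add: prod.distrib prod_power_distrib)
  also have "[(-1) ^ card (ordered_pairs (<) {..<n}) * \<dots> =
      (-1) ^ card (ordered_pairs (<) {..<n}) * (1 ^ (n - 1) * int n ^ n)] (mod p)"
    by (rule cong_mult[OF cong_refl cong_mult[OF cong_pow[OF prod_powers] cong_refl]])
  finally show ?thesis by simp
qed

lemma odd_root_power:
  assumes "n = m * k"
  shows "odd_root_of_unity_mod_prime p (b ^ k) m"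
proof
  show "prime p"
    by (rule prime)
  show "[(b ^ k) ^ m = 1] (mod p)"
    using root assms by (simp add: power_mult[symmetric] mult.commute)
  show "odd m"
    using odd_order assms by simp
  fix j assume "0 < j" "j < m"
  moreover have "0 < k"
    using order_pos assms by (cases k) auto
  ultimately have "0 < k * j" "k * j < n"
    using assms by (simp_all add: mult.commute)
  then show "\<not> [(b ^ k) ^ j = 1] (mod p)"
    using primitive by (simp add: power_mult[symmetric])
qed

lemma prod_vandermonde_columns:
  assumes "n = m * m"
  shows "[(\<Prod>r<m. vandermonde (<) {..<m} (\<lambda>q. b ^ (q * m + r + 1))) =
    vandermonde (<) {..<m} (\<lambda>q. (b ^ m) ^ q) ^ m] (mod p)"
proof -
  interpret root: odd_root_of_unity_mod_prime p "b ^ m" m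
    by (rule odd_root_power[OF assms])
  obtain k where m: "m = 2 * k + 1"
    using root.odd_order oddE by blast
  define C where "C = card (ordered_pairs (<) {..<m})"
  define V where "V = vandermonde (<) {..<m} (\<lambda>q. (b ^ m) ^ q)"
  have "C = m * k"
    using card_ordered_pairs_less[of m] m unfolding C_def by simp
  have "2 * (\<Sum>r<m. r) = 2 * (m * k)"
    using double_sum_lessThan[of m] m by simp
  moreover have "(\<Sum>r<m. r + 1) = (\<Sum>r<m. r) + (\<Sum>r<m. 1)"
    by (rule sum.distrib)
  ultimately have "(\<Sum>r<m. r + 1) = m * (k + 1)"
    by simp
  then have "(\<Prod>r<m. b ^ (r + 1)) = b ^ (m * (k + 1))"
    by (simp only: power_sum[symmetric])
  then have "(\<Prod>r<m. b ^ (r + 1)) ^ C = (b ^ (m * m)) ^ (k * (k + 1))"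
    using \<open>C = m * k\<close> by (simp add: power_mult[symmetric] algebra_simps)
  also have "\<dots> = (b ^ n) ^ (k * (k + 1))"
    using assms by simp
  also have "[\<dots> = 1 ^ (k * (k + 1))] (mod p)"
    by (intro cong_pow root)
  finally have column_factors: "[(\<Prod>r<m. b ^ (r + 1)) ^ C = 1] (mod p)"
    by simp
  have "vandermonde (<) {..<m} (\<lambda>q. b ^ (q * m + r + 1)) = (b ^ (r + 1)) ^ C * V" for r
  proof -
    have "(\<lambda>q. b ^ (q * m + r + 1)) = (\<lambda>q. b ^ (r + 1) * (b ^ m) ^ q)"
      by (simp add: fun_eq_iff power_add power_mult[symmetric] mult_ac)
    then show ?thesis
      unfolding V_def C_def by (simp only: vandermonde_scale)
  qed
  then have "(\<Prod>r<m. vandermonde (<) {..<m} (\<lambda>q. b ^ (q * m + r + 1))) = (\<Prod>r<m. (b ^ (r + 1)) ^ C * V)"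
    by (rule prod.cong[OF refl])
  also have "\<dots> = (\<Prod>r<m. b ^ (r + 1)) ^ C * V ^ m"
    by (simp only: prod.distrib prod_power_distrib prod_constant card_lessThan)
  also have "[\<dots> = 1 * V ^ m] (mod p)"
    by (intro cong_mult column_factors cong_refl)
  finally show ?thesis
    unfolding V_def by simp
qed

lemma prod_vandermonde_cross:
  assumes "n = m * m"
  shows "[(\<Prod>(r, r')\<in>ordered_pairs (<) {..<m}. \<Prod>q<m. \<Prod>q'<m. b ^ (q' * m + r' + 1) - b ^ (q * m + r + 1)) =
    vandermonde (<) {..<m} (\<lambda>q. (b ^ m) ^ q) ^ m] (mod p)"
proof -
  interpret root: odd_root_of_unity_mod_prime p "b ^ m" m
    by (rule odd_root_power[OF assms])
  have inner: "[(\<Prod>q'<m. b ^ (q' * m + r' + 1) - b ^ (q * m + r + 1)) =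
      b ^ m * ((b ^ m) ^ r' - (b ^ m) ^ r)] (mod p)" for q r r'
  proof -
    define w where "w = b ^ (q * m + r + 1)"
    define w' where "w' = b ^ (r' + 1)"
    have "w ^ m = b ^ (n * q + (m + m * r))"
      unfolding w_def power_mult[symmetric] using assms
      by (intro arg_cong[where f = "(^) b"]) (simp add: algebra_simps)
    also have "\<dots> = (b ^ n) ^ q * (b ^ m * (b ^ m) ^ r)"
      by (simp add: power_add power_mult)
    finally have w_power: "w ^ m = (b ^ n) ^ q * (b ^ m * (b ^ m) ^ r)" .
    have "(\<Prod>q'<m. b ^ (q' * m + r' + 1) - w) = (\<Prod>q'<m. w' * (b ^ m) ^ q' - w)"
      unfolding w'_def by (simp add: power_add power_mult[symmetric] mult_ac)
    also have "\<dots> = (-1) ^ m * (\<Prod>q'<m. w - w' * (b ^ m) ^ q')"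
      by (subst prod_diff_swap) simp
    also have "[\<dots> = (-1) ^ m * (w ^ m - w' ^ m)] (mod p)"
      by (intro cong_mult cong_refl root.prod_linear_factors)
    also have "(-1) ^ m * (w ^ m - w' ^ m) = w' ^ m - (b ^ n) ^ q * (b ^ m * (b ^ m) ^ r)"
      using root.odd_order w_power by simp
    also have "[\<dots> = w' ^ m - 1 ^ q * (b ^ m * (b ^ m) ^ r)] (mod p)"
      by (intro cong_diff cong_mult cong_pow root cong_refl)
    also have "w' ^ m = b ^ m * (b ^ m) ^ r'"
      unfolding w'_def by (simp add: power_add power_mult_distrib power_mult[symmetric] mult.commute)
    finally show ?thesis
      unfolding w_def by (simp add: algebra_simps)
  qed
  have "[(\<Prod>(r, r')\<in>ordered_pairs (<) {..<m}. \<Prod>q<m. \<Prod>q'<m. b ^ (q' * m + r' + 1) - b ^ (q * m + r + 1)) =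
      (\<Prod>(r, r')\<in>ordered_pairs (<) {..<m}. \<Prod>q<m. b ^ m * ((b ^ m) ^ r' - (b ^ m) ^ r))] (mod p)"
    unfolding split_def by (intro cong_prod inner)
  also have "(\<Prod>(r, r')\<in>ordered_pairs (<) {..<m}. \<Prod>q<m. b ^ m * ((b ^ m) ^ r' - (b ^ m) ^ r)) =
      (\<Prod>(r, r')\<in>ordered_pairs (<) {..<m}. (b ^ m) ^ m * ((b ^ m) ^ r' - (b ^ m) ^ r) ^ m)"
    by (simp add: power_mult_distrib)
  also have "[\<dots> = (\<Prod>(r, r')\<in>ordered_pairs (<) {..<m}. 1 * ((b ^ m) ^ r' - (b ^ m) ^ r) ^ m)] (mod p)"
    unfolding split_def by (intro cong_prod cong_mult cong_refl root.root)
  also have "(\<Prod>(r, r')\<in>ordered_pairs (<) {..<m}. 1 * ((b ^ m) ^ r' - (b ^ m) ^ r) ^ m) =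
      vandermonde (<) {..<m} (\<lambda>q. (b ^ m) ^ q) ^ m"
    unfolding vandermonde_def by (simp add: prod_power_distrib split_def)
  finally show ?thesis .
qed

lemma vandermonde_powers_square_order:
  assumes "n = m * m"
  shows "[vandermonde (<) {1..n} (\<lambda>e. b ^ e) = int m ^ n] (mod p)"
proof -
  interpret root: odd_root_of_unity_mod_prime p "b ^ m" m
    by (rule odd_root_power[OF assms])
  obtain k where m: "m = 2 * k + 1"
    using root.odd_order oddE by blast
  define C where "C = card (ordered_pairs (<) {..<m})"
  define V where "V = vandermonde (<) {..<m} (\<lambda>q. (b ^ m) ^ q)"
  have "C = m * k"
    using card_ordered_pairs_less[of m] m unfolding C_def by simp
  define \<phi> where "\<phi> = Suc \<circ> (\<lambda>(q, r). q * m + r)"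
  have "bij_betw \<phi> ({..<m} \<times> {..<m}) {1..n}"
    unfolding \<phi>_def using assms
    by (intro bij_betw_trans[OF bij_betw_lex_index]) (simp add: lessThan_atLeast0 atLeastLessThanSuc_atLeastAtMost)
  then have "vandermonde (<) ({..<m} \<times> {..<m}) ((\<lambda>e. b ^ e) \<circ> \<phi>) = vandermonde (<) {1..n} (\<lambda>e. b ^ e)"
    by (rule vandermonde_reindex) (auto simp: \<phi>_def lex_index_less_iff)
  then have "vandermonde (<) {1..n} (\<lambda>e. b ^ e) =
      vandermonde (<) ({..<m} \<times> {..<m}) (\<lambda>(q, r). b ^ (q * m + r + 1))"
    by (simp add: \<phi>_def comp_def split_def)
  also have "\<dots> = (-1) ^ (C * C) * ((\<Prod>r<m. vandermonde (<) {..<m} (\<lambda>q. b ^ (q * m + r + 1))) *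
      (\<Prod>(r, r')\<in>ordered_pairs (<) {..<m}. \<Prod>q<m. \<Prod>q'<m. b ^ (q' * m + r' + 1) - b ^ (q * m + r + 1)))"
    unfolding C_def by (simp add: vandermonde_lex_colex vandermonde_colex_split)
  also have "[\<dots> = (-1) ^ (C * C) * (V ^ m * V ^ m)] (mod p)"
    unfolding V_def
    by (intro cong_mult cong_refl prod_vandermonde_columns prod_vandermonde_cross assms)
  also have "(-1) ^ (C * C) * (V ^ m * V ^ m) = (-1) ^ (C * C) * (V ^ 2) ^ m"
    by (simp add: power_mult[symmetric] mult_2 power_add)
  also have "[\<dots> = (-1) ^ (C * C) * ((-1) ^ C * int m ^ m) ^ m] (mod p)"
    unfolding V_def C_def by (intro cong_mult cong_refl cong_pow root.vandermonde_powers_square)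
  also have "(-1) ^ (C * C) * ((-1) ^ C * int m ^ m) ^ m = (-1) ^ (C * (C + m)) * int m ^ n"
    using assms by (simp add: power_mult_distrib power_mult[symmetric] power_add algebra_simps)
  also have "C * (C + m) = m * m * (k * (k + 1))"
    using \<open>C = m * k\<close> by (simp add: algebra_simps)
  finally show ?thesis
    by simp
qed

end

section \<open>The Vandermonde product of the squares\<close>

lemma fact_mult_fact_complement_cong:
  fixes p :: nat
  assumes p: "prime p" and "k < p"
  shows "[fact k * fact (p - 1 - k) = (-1::int) ^ (k + 1)] (mod int p)"
  using \<open>k < p\<close>
proof (induction k)
  case 0
  then show ?case
    using wilson_theorem[OF p] by simp
next
  case (Suc k)
  define F where "F = (fact k * fact (p - 1 - Suc k) :: int)"
  have "p - 1 - k = Suc (p - 1 - Suc k)"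
    using Suc.prems by simp
  then have "fact k * fact (p - 1 - k) = F * (int p - int (Suc k))"
    unfolding F_def using Suc.prems by (simp add: algebra_simps of_nat_diff)
  then have "fact (Suc k) * fact (p - 1 - Suc k) = int p * F - fact k * fact (p - 1 - k)"
    unfolding F_def by (simp add: algebra_simps)
  also have "[\<dots> = 0 - (-1) ^ (k + 1)] (mod int p)"
    using Suc by (intro cong_diff) (simp_all add: cong_0_iff)
  finally show ?case
    by simp
qed

lemma prod_square_diff_fact_partial:
  fixes j t :: nat
  assumes "1 \<le> t" "t \<le> j"
  shows "(\<Prod>i\<in>{1..<t}. (int j)^2 - (int i)^2) * fact (j - t) * fact j = (fact (j - 1) * fact (j + t - 1) :: int)"
  using assms
proof (induction t rule: nat_induct_at_least)
  case base
  then show ?case by simp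
next
  case (Suc t)
  then have IH: "(\<Prod>i\<in>{1..<t}. (int j)^2 - (int i)^2) * fact (j - t) * fact j = (fact (j - 1) * fact (j + t - 1) :: int)"
    by simp
  define Q where "Q = (\<Prod>i\<in>{1..<t}. (int j)^2 - (int i)^2)"
  have prod_Suc: "(\<Prod>i\<in>{1..<Suc t}. (int j)^2 - (int i)^2) = Q * ((int j)^2 - (int t)^2)"
    unfolding Q_def using Suc.hyps by (simp add: prod.atLeastLessThan_Suc)
  have fact_diff: "(fact (j - t) :: int) = int (j - t) * fact (j - Suc t)"
  proof -
    have "j - t = Suc (j - Suc t)" using Suc.prems by simp
    then show ?thesis by (simp del: of_nat_diff)
  qed
  have fact_sum: "(fact (j + Suc t - 1) :: int) = int (j + t) * fact (j + t - 1)"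
  proof -
    have e: "j + Suc t - 1 = Suc (j + t - 1)" "Suc (j + t - 1) = j + t" using Suc.hyps by auto
    have "(fact (j + Suc t - 1)::int) = fact (Suc (j + t - 1))" using e(1) by simp
    also have "\<dots> = of_nat (Suc (j + t - 1)) * fact (j + t - 1)" by (rule fact_Suc)
    finally show ?thesis using e(2) by simp
  qed
  have square_diff: "(int j)^2 - (int t)^2 = int (j - t) * int (j + t)"
    using Suc.prems by (simp add: of_nat_diff power2_eq_square algebra_simps)
  have "(\<Prod>i\<in>{1..<Suc t}. (int j)^2 - (int i)^2) * fact (j - Suc t) * fact j
      = (Q * fact (j - t) * fact j) * int (j + t)"
    unfolding prod_Suc square_diff fact_diff by (simp add: algebra_simps)
  also have "\<dots> = fact (j - 1) * fact (j + Suc t - 1)"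
    using IH unfolding Q_def[symmetric] fact_sum by (simp add: algebra_simps)
  finally show ?case .
qed

lemma prod_square_diff_fact:
  fixes j :: nat
  assumes "1 \<le> j"
  shows "(\<Prod>i\<in>{1..<j}. (int j)^2 - (int i)^2) * int j = (fact (2 * j - 1) :: int)"
proof -
  have "(\<Prod>i\<in>{1..<j}. (int j)^2 - (int i)^2) * fact (j - j) * fact j = (fact (j - 1) * fact (j + j - 1) :: int)"
    using prod_square_diff_fact_partial[of j j] assms by simp
  moreover have "(fact j :: int) = int j * fact (j - 1)"
    using assms by (simp add: fact_reduce)
  moreover have "(fact (j + j - 1) :: int) = fact (2 * j - 1)" by (simp add: mult_2)
  ultimately have "fact (j - 1) * ((\<Prod>i\<in>{1..<j}. (int j)^2 - (int i)^2) * int j) = fact (j - 1) * (fact (2 * j - 1) :: int)"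
    by (simp add: algebra_simps)
  moreover have "(fact (j - 1) :: int) \<noteq> 0" by simp
  ultimately show ?thesis by simp
qed

text \<open>The factors pair off as \<open>(2j-1)! (p-1-(2j-1))! \<equiv> 1\<close>, leaving the middle factor \<open>h!\<close>.\<close>
lemma prod_odd_fact_cong:
  fixes p h :: nat
  assumes p: "prime p" and ph: "p = 2 * h + 1" and h: "odd h"
  shows "[(\<Prod>j\<in>{1..h}. (fact (2 * j - 1) :: int)) = fact h] (mod int p)"
proof -
  obtain s where hs: "h = 2 * s + 1" using h oddE by blast
  define F where "F = (\<lambda>j::nat. (fact (2 * j - 1) :: int))"
  define g where "g = (\<lambda>j::nat. h + 1 - j)"
  have halves: "{1..h} = {1..s} \<union> {s+1..h}" using hs by auto
  have split: "(\<Prod>j\<in>{1..h}. F j) = (\<Prod>j\<in>{1..s}. F j) * (\<Prod>j\<in>{s+1..h}. F j)"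
    unfolding halves by (rule prod.union_disjoint) auto
  have bij: "bij_betw g {1..s+1} {s+1..h}"
  proof (rule bij_betw_imageI)
    show "inj_on g {1..s+1}" unfolding g_def inj_on_def using hs by auto
    show "g ` {1..s+1} = {s+1..h}"
    proof (intro equalityI subsetI)
      fix j assume "j \<in> g ` {1..s+1}" then show "j \<in> {s+1..h}" unfolding g_def using hs by auto
    next
      fix j assume j: "j \<in> {s+1..h}"
      then have "j = g (h + 1 - j)" "h + 1 - j \<in> {1..s+1}" unfolding g_def using hs by auto
      then show "j \<in> g ` {1..s+1}" by blast
    qed
  qed
  have "(\<Prod>j\<in>{s+1..h}. F j) = (\<Prod>j\<in>{1..s+1}. F (g j))"
    by (rule prod.reindex_bij_betw[OF bij, symmetric])
  also have "\<dots> = (\<Prod>j\<in>{1..s}. F (g j)) * F (g (s + 1))"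
    by (simp add: prod.cl_ivl_Suc)
  also have "F (g (s + 1)) = fact h" unfolding F_def g_def using hs by simp
  finally have upper: "(\<Prod>j\<in>{s+1..h}. F j) = (\<Prod>j\<in>{1..s}. F (g j)) * fact h" .
  have "(\<Prod>j\<in>{1..h}. F j) = (\<Prod>j\<in>{1..s}. F j * F (g j)) * fact h"
    unfolding split upper prod.distrib by (simp add: algebra_simps)
  also have "[\<dots> = (\<Prod>j\<in>{1..s}. 1) * fact h] (mod int p)"
  proof (intro cong_mult cong_prod cong_refl)
    fix j assume j: "j \<in> {1..s}"
    have "2 * j - 1 < p" using j hs ph by auto
    have "p - 1 - (2 * j - 1) = 2 * g j - 1" unfolding g_def using j hs ph by auto
    then have "F j * F (g j) = fact (2 * j - 1) * fact (p - 1 - (2 * j - 1))" unfolding F_def by simp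
    also have "[\<dots> = (-1) ^ (2 * j - 1 + 1)] (mod int p)" by (rule fact_mult_fact_complement_cong[OF p \<open>2 * j - 1 < p\<close>])
    also have "(-1::int) ^ (2 * j - 1 + 1) = 1" using j by simp
    finally show "[F j * F (g j) = 1] (mod int p)" .
  qed
  finally show ?thesis unfolding F_def by simp
qed

lemma vandermonde_squares_cong:
  fixes p h :: nat
  assumes p: "prime p" and ph: "p = 2 * h + 1" and "odd h"
  shows "[vandermonde (<) {1..h} (\<lambda>j. int j ^ 2) = 1] (mod int p)"
proof -
  define D where "D = vandermonde (<) {1..h} (\<lambda>j. int j ^ 2)"
  have "D = (\<Prod>j\<in>{1..h}. \<Prod>i\<in>{1..<j}. int j ^ 2 - int i ^ 2)"
    unfolding D_def vandermonde_less_nested[OF finite_atLeastAtMost]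
    by (intro prod.cong refl) auto
  then have "D * fact h = (\<Prod>j\<in>{1..h}. (\<Prod>i\<in>{1..<j}. int j ^ 2 - int i ^ 2) * int j)"
    by (simp add: fact_prod prod.distrib)
  also have "\<dots> = (\<Prod>j\<in>{1..h}. (fact (2 * j - 1) :: int))"
    by (intro prod.cong refl prod_square_diff_fact) simp
  also have "[\<dots> = 1 * fact h] (mod int p)"
    using prod_odd_fact_cong[OF assms] by simp
  finally have "[D * fact h = 1 * fact h] (mod int p)" .
  moreover have "coprime (fact h :: int) (int p)"
  proof -
    have "\<not> p dvd fact h"
      using prime_dvd_fact_iff[OF p] ph by simp
    then have "coprime p (fact h)"
      using p by (simp add: prime_imp_coprime)
    then show ?thesis
      by (metis coprime_commute coprime_int_iff of_nat_fact)
  qed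
  ultimately show ?thesis
    unfolding D_def using cong_mult_rcancel by blast
qed

section \<open>Powers of odd divisors of \<open>(p - 1) / 2\<close>\<close>

text \<open>Since \<open>p \<equiv> 1 (mod q)\<close> is a square modulo \<open>q\<close>, quadratic reciprocity and Euler's criterion
  determine \<open>q^h\<close> modulo \<open>p\<close>; as \<open>h = (p - 1) / 2\<close> is odd, the reciprocity exponent
  \<open>(q - 1) / 2 \<cdot> h\<close> has the parity of \<open>(q - 1) / 2\<close>.\<close>
lemma prime_divisor_power_half_cong:
  fixes p h q :: nat
  assumes p: "prime p" and ph: "p = 2 * h + 1" and "odd h" and q: "prime q" "q dvd h"
  shows "[int q ^ h = (-1) ^ ((q - 1) div 2)] (mod int p)"
proof -
  have "0 < h"
    using \<open>odd h\<close> by (cases h) auto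
  have "q \<le> h"
    using q(2) \<open>0 < h\<close> by (simp add: dvd_imp_le)
  moreover have "odd q"
    using q(2) \<open>odd h\<close> by (auto dest: dvd_trans[of 2])
  ultimately have "2 < q" "q \<noteq> p" "2 < p"
    using prime_gt_1_nat[OF q(1)] ph by (auto simp: odd_pos intro: le_neq_implies_less)
  have "[int p = 1] (mod int q)"
    using q(2) ph by (simp add: cong_iff_dvd_diff)
  moreover have "\<not> [int p = 0] (mod int q)"
  proof
    assume "[int p = 0] (mod int q)"
    with \<open>[int p = 1] (mod int q)\<close> have "[1 = 0] (mod int q)"
      by (metis cong_sym cong_trans)
    then show False
      using prime_gt_1_nat[OF q(1)] by (simp add: cong_iff_dvd_diff)
  qed
  ultimately have "Legendre (int p) (int q) = 1"
    unfolding Legendre_def QuadRes_def by (auto intro!: exI[of _ 1] simp: cong_sym)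
  moreover have "Legendre (int q) (int p) * Legendre (int p) (int q) = (-1) ^ ((q - 1) div 2 * h)"
    using Quadratic_Reciprocity[OF q(1) \<open>2 < q\<close> p \<open>2 < p\<close> \<open>q \<noteq> p\<close>] ph by simp
  ultimately have "Legendre (int q) (int p) = (-1) ^ ((q - 1) div 2)"
    using \<open>odd h\<close> by (cases "even ((q - 1) div 2)") (simp_all add: power_mult)
  moreover have "[Legendre (int q) (int p) = int q ^ h] (mod int p)"
    using euler_criterion[OF p \<open>2 < p\<close>, of "int q"] ph by simp
  ultimately show ?thesis
    by (simp add: cong_sym)
qed

lemma odd_divisor_power_half_cong:
  fixes p h y :: nat
  assumes p: "prime p" and ph: "p = 2 * h + 1" and "odd h"
  shows "y dvd h \<Longrightarrow> [int y ^ h = (-1) ^ ((y - 1) div 2)] (mod int p)"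
proof (induction y rule: less_induct)
  case (less y)
  show ?case
  proof (cases "y = 1")
    case False
    have "y \<noteq> 0"
      using less.prems \<open>odd h\<close> by (metis dvd_0_left_iff even_zero)
    then obtain q z where q: "prime q" "y = q * z"
      using prime_factor_nat[OF False] by (auto elim: dvdE)
    then have "z < y" "z dvd h" "q dvd h"
      using less.prems \<open>y \<noteq> 0\<close> prime_gt_1_nat[of q] by (auto intro: dvd_mult_left dvd_mult_right)
    obtain a c where "q = 2 * a + 1" "z = 2 * c + 1"
      using \<open>q dvd h\<close> \<open>z dvd h\<close> \<open>odd h\<close> by (metis dvd_trans even_mult_iff oddE odd_one)
    moreover have "(y - 1) div 2 = 2 * (a * c) + (a + c)"
      using q(2) \<open>q = 2 * a + 1\<close> \<open>z = 2 * c + 1\<close> by (simp add: algebra_simps)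
    ultimately have "(-1::int) ^ ((q - 1) div 2) * (-1) ^ ((z - 1) div 2) = (-1) ^ ((y - 1) div 2)"
      by (simp add: power_add power_mult)
    moreover have "[int q ^ h * int z ^ h = (-1) ^ ((q - 1) div 2) * (-1) ^ ((z - 1) div 2)] (mod int p)"
      by (intro cong_mult prime_divisor_power_half_cong[OF assms q(1) \<open>q dvd h\<close>] less.IH \<open>z < y\<close> \<open>z dvd h\<close>)
    ultimately show ?thesis
      using q(2) by (simp add: power_mult_distrib)
  qed simp
qed

section \<open>The permutation \<open>\<tau>\<^sub>g\<close>\<close>

lemma odd_root_of_unity_primroot_square:
  assumes p: "prime p" and ph: "p = 2 * h + 1" and "odd h" and g: "residue_primroot p g"
  shows "odd_root_of_unity_mod_prime (int p) (int g ^ 2) h"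
proof -
  have "ord p g = 2 * h"
    using g p ph by (simp add: residue_primroot_def totient_prime)
  then have g_pow: "[(int g ^ 2) ^ k = 1] (mod int p) \<longleftrightarrow> h dvd k" for k
    using ord_divides[of g "2 * k" p] by (simp add: power_mult[symmetric] cong_int_iff[symmetric])
  show ?thesis
  proof
    fix k assume "0 < k" "k < h"
    then show "\<not> [(int g ^ 2) ^ k = 1] (mod int p)"
      using g_pow by (auto dest: dvd_imp_le)
  qed (use p \<open>odd h\<close> g_pow in auto)
qed

lemma tau_mem_half_set:
  assumes "prime p" "odd p" "coprime p g"
  shows "tau p g b \<in> half_set p"
proof -
  define r where "r = g ^ b mod p"
  have "r \<noteq> 0"
  proof
    assume "r = 0"
    then have "p dvd g"
      using prime_dvd_power[OF assms(1)] unfolding r_def by auto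
    then show False
      using assms(1,3) coprime_absorb_left not_prime_unit by blast
  qed
  moreover have "r < p"
    unfolding r_def by (rule mod_less_divisor[OF prime_gt_0_nat[OF assms(1)]])
  ultimately show ?thesis
    using \<open>odd p\<close> unfolding tau_def half_set_def r_def[symmetric] Let_def by (auto elim!: oddE)
qed

lemma tau_square_cong:
  assumes "0 < p"
  shows "[int (tau p g b) ^ 2 = (int g ^ 2) ^ b] (mod int p)"
proof -
  define r where "r = g ^ b mod p"
  have "[int (tau p g b) ^ 2 = int r ^ 2] (mod int p)"
  proof (cases "r \<in> half_set p")
    case False
    have "r \<le> p"
      using mod_less_divisor[OF assms, of "g ^ b"] unfolding r_def by linarith
    then have "int (tau p g b) ^ 2 = int r ^ 2 + int p * (int p - 2 * int r)"
      using False unfolding tau_def r_def[symmetric] Let_def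
      by (simp add: of_nat_diff power2_eq_square algebra_simps)
    then show ?thesis
      by (simp add: cong_iff_dvd_diff)
  qed (simp add: tau_def r_def)
  also have "[int r ^ 2 = (int g ^ b) ^ 2] (mod int p)"
    unfolding r_def by (intro cong_pow) (simp add: cong_def of_nat_mod)
  finally show ?thesis
    by (simp add: power_mult[symmetric] mult.commute)
qed

lemma bij_betw_tau:
  assumes p: "prime p" and ph: "p = 2 * h + 1" and "odd h" and g: "residue_primroot p g"
  shows "bij_betw (tau p g) (half_set p) (half_set p)"
proof -
  interpret root: odd_root_of_unity_mod_prime "int p" "int g ^ 2" h
    by (rule odd_root_of_unity_primroot_square[OF assms])
  have H: "half_set p = {1..h}"
    unfolding half_set_def ph by simp
  have "0 < p"
    using ph by simp
  have "tau p g ` half_set p \<subseteq> half_set p"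
    using tau_mem_half_set[OF p] g ph by (auto simp: residue_primroot_def)
  moreover have "inj_on (tau p g) (half_set p)"
  proof (rule inj_onI)
    fix b b' assume "b \<in> half_set p" "b' \<in> half_set p" "tau p g b = tau p g b'"
    then have "[(int g ^ 2) ^ b = (int g ^ 2) ^ b'] (mod int p)"
      using tau_square_cong[OF \<open>0 < p\<close>, of g b] tau_square_cong[OF \<open>0 < p\<close>, of g b']
      by (metis cong_sym cong_trans)
    then have cong: "[b = b'] (mod h)"
      by (rule root.pow_cong_imp_cong)
    have eq: "c = c'" if "[c = c'] (mod h)" "c' \<le> c" "c \<in> {1..h}" "c' \<in> {1..h}" for c c'
    proof -
      have "h dvd c - c'" "c - c' < h"
        using that by (auto simp: cong_altdef_nat)
      then show ?thesis
        using that(2) by (cases "c - c' = 0") (auto dest: dvd_imp_le)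
    qed
    show "b = b'"
    proof (cases "b' \<le> b")
      case True
      then show ?thesis
        using eq[OF cong] \<open>b \<in> half_set p\<close> \<open>b' \<in> half_set p\<close> unfolding H by blast
    next
      case False
      then show ?thesis
        using eq[OF cong_sym[OF cong]] \<open>b \<in> half_set p\<close> \<open>b' \<in> half_set p\<close> unfolding H by simp
    qed
  qed
  moreover have "finite (half_set p)"
    by (simp add: half_set_def)
  ultimately show ?thesis
    by (simp add: bij_betw_def endo_inj_surj)
qed

lemma sign_on_tau_vandermonde_cong:
  assumes p: "prime p" and ph: "p = 2 * h + 1" and "odd h" and g: "residue_primroot p g"
  shows "[sign_on (half_set p) (tau p g) * vandermonde (<) {1..h} (\<lambda>j. int j ^ 2) =
    vandermonde (<) {1..h} (\<lambda>e. (int g ^ 2) ^ e)] (mod int p)"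
proof -
  have H: "half_set p = {1..h}"
    unfolding half_set_def ph by simp
  define \<pi> where "\<pi> = restrict_id (tau p g) {1..h}"
  have "\<pi> permutes {1..h}"
    unfolding \<pi>_def using bij_betw_tau[OF assms] H by (simp add: permutes_restrict_id)
  then have "of_int (sign \<pi>) * vandermonde (<) {1..h} (\<lambda>j. int j ^ 2) =
      vandermonde (<) {1..h} ((\<lambda>j. int j ^ 2) \<circ> \<pi>)"
    by (simp add: vandermonde_comp_permutes)
  also have "[\<dots> = vandermonde (<) {1..h} (\<lambda>e. (int g ^ 2) ^ e)] (mod int p)"
  proof (unfold vandermonde_def split_def, intro cong_prod cong_diff)
    fix q assume "q \<in> ordered_pairs (<) {1..h}"
    then have "fst q \<in> {1..h}" "snd q \<in> {1..h}"
      unfolding ordered_pairs_def by auto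
    moreover have "0 < p"
      using ph by simp
    ultimately show "[((\<lambda>j. int j ^ 2) \<circ> \<pi>) (snd q) = (int g ^ 2) ^ snd q] (mod int p)"
      "[((\<lambda>j. int j ^ 2) \<circ> \<pi>) (fst q) = (int g ^ 2) ^ fst q] (mod int p)"
      using tau_square_cong[of p g] by (simp_all add: \<pi>_def)
  qed
  finally show ?thesis
    unfolding sign_on_def H \<pi>_def by simp
qed

lemma unit_cong_imp_eq:
  fixes a b m :: int
  assumes "[a = b] (mod m)" "2 < m" "\<bar>a\<bar> = 1" "\<bar>b\<bar> = 1"
  shows "a = b"
proof (rule ccontr)
  assume "a \<noteq> b"
  then have "a - b = 2 \<or> a - b = -2"
    using assms(3,4) by (auto simp: abs_if split: if_splits)
  then have "m dvd 2"
    using assms(1) by (auto simp: cong_iff_dvd_diff)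
  then show False
    using assms(2) by (auto dest: zdvd_imp_le)
qed

theorem theorem1p1:
  fixes n p g :: nat
  assumes "n > 0"
    and "p = 18 * (2 * n + 1)^2 + 1"
    and "prime p"
    and "g < p"
    and "residue_primroot p g"
  shows "sign_on (half_set p) (tau p g) = (-1) ^ (n + 1)"
proof -
  define x where "x = 3 * (2 * n + 1)"
  have ph: "p = 2 * (x * x) + 1" and "odd (x * x)"
    using assms(2) by (simp_all add: x_def power2_eq_square algebra_simps)
  interpret root: odd_root_of_unity_mod_prime "int p" "int g ^ 2" "x * x"
    by (rule odd_root_of_unity_primroot_square[OF assms(3) ph \<open>odd (x * x)\<close> assms(5)])
  have "[sign_on (half_set p) (tau p g) * 1 =
      sign_on (half_set p) (tau p g) * vandermonde (<) {1..x * x} (\<lambda>j. int j ^ 2)] (mod int p)"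
    using vandermonde_squares_cong[OF assms(3) ph \<open>odd (x * x)\<close>] by (intro cong_mult cong_refl) (rule cong_sym)
  also have "[sign_on (half_set p) (tau p g) * vandermonde (<) {1..x * x} (\<lambda>j. int j ^ 2) =
      vandermonde (<) {1..x * x} (\<lambda>e. (int g ^ 2) ^ e)] (mod int p)"
    by (rule sign_on_tau_vandermonde_cong[OF assms(3) ph \<open>odd (x * x)\<close> assms(5)])
  also have "[vandermonde (<) {1..x * x} (\<lambda>e. (int g ^ 2) ^ e) = int x ^ (x * x)] (mod int p)"
    by (rule root.vandermonde_powers_square_order) simp
  also have "[int x ^ (x * x) = (-1) ^ ((x - 1) div 2)] (mod int p)"
    by (rule odd_divisor_power_half_cong[OF assms(3) ph \<open>odd (x * x)\<close>]) simp
  also have "(x - 1) div 2 = 2 * n + (n + 1)"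
    by (simp add: x_def)
  finally have "[sign_on (half_set p) (tau p g) = (-1) ^ (n + 1)] (mod int p)"
    by (simp add: power_add power_mult)
  moreover have "2 < int p"
    using ph \<open>odd (x * x)\<close> by (cases "x * x") auto
  ultimately show ?thesis
    by (rule unit_cong_imp_eq) (simp_all add: sign_on_def)
qed

end
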